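(* Let $\rho \in [\frac{1}{2},1)$. The running time of $\mathrm{BasketSort}(S, w_S)$ with shrinking rate $\rho$, on a sequence $S$ of $m$ elements with $1 \le w_S \le m$, is $O\left(\frac{m \cdot w_S}{1-\rho}\right)$.
   Context: Algorithm BasketSort$(S,w_S)$ with shrinking rate $\rho$: set $S_{\lfloor w_S\rfloor} = S$ and $w = \lfloor w_S \rfloor$. While $w \ge 1$: partition the current sequence $S_w$ into $\lceil m/w \rceil$ baskets $B_1, B_2,\dots$ of consecutive elements, each of the first $\lceil m/w\rceil - 1$ having exactly $w$ elements and the last at most $w$; for each $i$, let $B = \bigcup_{j=\max\{1,i-3\}}^{\min\{i+3,\lceil m/w\rceil\}} B_j$, for each $x\in B$ let $\mathrm{score}(x)$ be the number of $y \in B\setminus\{x\}$ such that the (noisy) comparison reports $y$ smaller than $x$, let $A$ be $B$ stably sorted in non-decreasing order of score, and for each $x \in B_i$ set $\tau_w(x) = \max\{0,i-4\}\cdot w + \mathrm{pos}(x,A)$ (position of $x$ in $A$); then let $S_{\lfloor \rho w\rfloor}$ be $S_w$ stably sorted in non-decreasing order of $\tau_w$, and set $w \leftarrow \lfloor \rho w \rfloor$. Return $S_0$. Each comparison takes constant time. *)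

theory Defs
  imports Complex_Main
begin

(* The (noisy) comparison cmp_fun is an
arbitrary function; it may depend on the current basket width w and the basket index i,
so repeated queries can give inconsistent answers. cmp w i y x = "y reported smaller than x". *)

type_synonym 'a cmp_fun = "nat \<Rightarrow> nat \<Rightarrow> 'a \<Rightarrow> 'a \<Rightarrow> bool"

definition n_baskets :: "nat \<Rightarrow> nat \<Rightarrow> nat" where
  "n_baskets m w = (m + w - 1) div w"

(* The union B of baskets B_lo .. B_hi with lo = max 1 (i-3), hi = min (i+3) k. *)
definition window :: "nat \<Rightarrow> 'a list \<Rightarrow> nat \<Rightarrow> 'a list" where
  "window w S i = (let k = n_baskets (length S) w; lo = max 1 (i - 3); hi = min (i + 3) k
                   in take ((hi + 1 - lo) * w) (drop ((lo - 1) * w) S))"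

definition score :: "'a cmp_fun \<Rightarrow> nat \<Rightarrow> nat \<Rightarrow> 'a list \<Rightarrow> nat \<Rightarrow> nat" where
  "score cmp w i B j = card {l. l < length B \<and> l \<noteq> j \<and> cmp w i (B ! l) (B ! j)}"

(* A: the positions of B stably sorted by score; pos is 1-based. *)
definition pos_in_A :: "'a cmp_fun \<Rightarrow> nat \<Rightarrow> nat \<Rightarrow> 'a list \<Rightarrow> nat \<Rightarrow> nat" where
  "pos_in_A cmp w i B j =
     (let A = sort_key (score cmp w i B) [0..<length B] in 1 + length (takeWhile (\<lambda>l. l \<noteq> j) A))"

(* tau_w of the element at (0-based) global position p of S. *)
definition tau :: "'a cmp_fun \<Rightarrow> nat \<Rightarrow> 'a list \<Rightarrow> nat \<Rightarrow> nat" where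
  "tau cmp w S p = (let i = p div w + 1; t = p mod w; lo = max 1 (i - 3);
                        B = window w S i in (i - 4) * w + pos_in_A cmp w i B ((i - lo) * w + t))"

definition round_out :: "'a cmp_fun \<Rightarrow> nat \<Rightarrow> 'a list \<Rightarrow> 'a list" where
  "round_out cmp w S = map snd (sort_key fst (zip (map (tau cmp w S) [0..<length S]) S))"

(* Cost of one round: |B|(|B|-1) comparisons plus O(|B|) for computing scores and
stably (counting-)sorting B per basket, plus O(m) for the stable counting sort by tau
(keys are at most m + 7w) and loop overhead. *)
definition round_cost :: "nat \<Rightarrow> 'a list \<Rightarrow> nat" where
  "round_cost w S = (\<Sum>i = 1..n_baskets (length S) w. length (window w S i) ^ 2 + length (window w S i))
                    + 2 * length S + 1"

fun bs_iter :: "real \<Rightarrow> 'a cmp_fun \<Rightarrow> nat \<Rightarrow> nat \<Rightarrow> 'a list \<Rightarrow> 'a list \<times> nat" where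
  "bs_iter \<rho> cmp 0 w S = (S, 0)"
| "bs_iter \<rho> cmp (Suc f) w S =
     (if w = 0 then (S, 0)
      else (let S' = round_out cmp w S;
                (R, c) = bs_iter \<rho> cmp f (nat \<lfloor>\<rho> * real w\<rfloor>) S'
            in (R, round_cost w S + c)))"

(* Fuel floor(w_S)+1 is never exhausted when rho < 1 (w strictly decreases). *)
definition basket_sort :: "real \<Rightarrow> 'a cmp_fun \<Rightarrow> 'a list \<Rightarrow> real \<Rightarrow> 'a list \<times> nat" where
  "basket_sort \<rho> cmp S wS = bs_iter \<rho> cmp (nat \<lfloor>wS\<rfloor> + 1) (nat \<lfloor>wS\<rfloor>) S"

definition basket_sort_time :: "real \<Rightarrow> 'a cmp_fun \<Rightarrow> 'a list \<Rightarrow> real \<Rightarrow> nat" where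
  "basket_sort_time \<rho> cmp S wS = snd (basket_sort \<rho> cmp S wS)"

end

theory Submission
  imports Defs
begin

text \<open>A window consists of at most seven baskets of width \<open>w\<close>, and there are at most
  \<open>2m/w\<close> baskets, so one round with basket width \<open>w \<le> m\<close> costs \<open>O(m w)\<close>. The widths shrink
  geometrically by the factor \<open>\<rho>\<close>, so the total cost is \<open>O(m w\<^sub>S \<Sum>\<^sub>k \<rho>\<^sup>k) = O(m w\<^sub>S / (1 - \<rho>))\<close>.\<close>

lemma length_window_le: "length (window w S i) \<le> 7 * w"
proof -
  have "length (window w S i) \<le> (min (i + 3) (n_baskets (length S) w) + 1 - max 1 (i - 3)) * w"
    unfolding window_def Let_def by simp
  also have "\<dots> \<le> 7 * w"
    by (intro mult_right_mono) auto
  finally show ?thesis .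
qed

lemma n_baskets_mult_le: "n_baskets m w * w \<le> m + w - 1"
  unfolding n_baskets_def by (rule div_times_less_eq_dividend)

lemma length_round_out [simp]: "length (round_out cmp w S) = length S"
  unfolding round_out_def by (simp add: length_sort)

lemma round_cost_le:
  assumes "1 \<le> w" "w \<le> length S"
  shows "round_cost w S \<le> 115 * length S * w"
proof -
  let ?m = "length S" and ?k = "n_baskets (length S) w"
  have basket_cost: "length (window w S i) ^ 2 + length (window w S i) \<le> 56 * (w * w)" for i
  proof -
    have "length (window w S i) ^ 2 + length (window w S i) \<le> (7 * w) ^ 2 + 7 * w"
      using length_window_le by (intro add_mono power_mono) auto
    also have "\<dots> \<le> 56 * (w * w)"
      using assms(1) by (simp add: power2_eq_square)
    finally show ?thesis .
  qed
  have "(\<Sum>i = 1..?k. length (window w S i) ^ 2 + length (window w S i)) \<le> (\<Sum>i = 1..?k. 56 * (w * w))"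
    by (rule sum_mono) (rule basket_cost)
  also have "\<dots> = 56 * w * (?k * w)"
    by (simp add: algebra_simps)
  also have "\<dots> \<le> 56 * w * (2 * ?m)"
    using n_baskets_mult_le[of ?m w] assms by (intro mult_left_mono) auto
  finally have "(\<Sum>i = 1..?k. length (window w S i) ^ 2 + length (window w S i)) \<le> 112 * ?m * w"
    by (simp add: mult.commute mult.left_commute)
  moreover have "2 * ?m + 1 \<le> 3 * ?m * w"
    using assms mult_le_mono2[OF assms(1), of ?m] by linarith
  ultimately show ?thesis
    unfolding round_cost_def by linarith
qed

text \<open>The invariant is closed under a round because
  \<open>c m w + c m (\<rho> w) / (1 - \<rho>) = c m w / (1 - \<rho>)\<close>.\<close>

lemma bs_iter_cost_le:
  assumes "0 \<le> \<rho>" "\<rho> < 1" "length S = m" "w \<le> m"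
  shows "real (snd (bs_iter \<rho> cmp f w S)) \<le> 115 * real m * real w / (1 - \<rho>)"
  using assms(3,4)
proof (induction f arbitrary: w S)
  case 0
  then show ?case using assms(2) by simp
next
  case (Suc f)
  show ?case
  proof (cases "w = 0")
    case True
    then show ?thesis by simp
  next
    case False
    define w' where "w' = nat \<lfloor>\<rho> * real w\<rfloor>"
    have w'_le: "real w' \<le> \<rho> * real w"
      unfolding w'_def using assms(1) by simp
    have "\<rho> * real w \<le> real w"
      using assms(1,2) by (simp add: mult_left_le_one_le)
    with w'_le Suc.prems have "w' \<le> m"
      by linarith
    then have tail: "real (snd (bs_iter \<rho> cmp f w' (round_out cmp w S))) \<le> 115 * real m * real w' / (1 - \<rho>)"
      using Suc.IH Suc.prems by simp
    have "round_cost w S \<le> 115 * m * w"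
      using round_cost_le[of w S] Suc.prems False by simp
    then have head: "real (round_cost w S) \<le> 115 * real m * real w"
      by (metis of_nat_le_iff of_nat_mult of_nat_numeral)
    have unfold: "snd (bs_iter \<rho> cmp (Suc f) w S)
        = round_cost w S + snd (bs_iter \<rho> cmp f w' (round_out cmp w S))"
      using False unfolding w'_def by (simp add: Let_def split: prod.split)
    have gap: "0 < 1 - \<rho>"
      using assms(2) by simp
    have "115 * real m * real w' / (1 - \<rho>) \<le> 115 * real m * (\<rho> * real w) / (1 - \<rho>)"
      using w'_le gap by (intro divide_right_mono mult_left_mono) auto
    moreover have "115 * real m * real w + 115 * real m * (\<rho> * real w) / (1 - \<rho>)
        = 115 * real m * real w / (1 - \<rho>)"
      using gap by (simp add: field_simps)
    ultimately show ?thesis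
      using unfold tail head by simp
  qed
qed

lemma basket_sort_time_le:
  assumes "0 \<le> \<rho>" "\<rho> < 1" "0 \<le> wS" "wS \<le> real (length S)"
  shows "real (basket_sort_time \<rho> cmp S wS) \<le> 115 * (real (length S) * wS / (1 - \<rho>))"
proof -
  have floor_le: "real (nat \<lfloor>wS\<rfloor>) \<le> wS"
    using assms(3) by simp
  with assms(4) have "nat \<lfloor>wS\<rfloor> \<le> length S"
    by linarith
  then have "real (basket_sort_time \<rho> cmp S wS) \<le> 115 * real (length S) * real (nat \<lfloor>wS\<rfloor>) / (1 - \<rho>)"
    unfolding basket_sort_time_def basket_sort_def
    using bs_iter_cost_le assms(1,2) by blast
  also have "\<dots> \<le> 115 * real (length S) * wS / (1 - \<rho>)"
    using floor_le assms(2) by (intro divide_right_mono mult_left_mono) auto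
  finally show ?thesis
    by simp
qed

theorem lemma5p1:
  "\<exists>C::real. \<forall>(\<rho>::real) (cmp::'a cmp_fun) (S::'a list) (wS::real).
     1/2 \<le> \<rho> \<and> \<rho> < 1 \<and> 1 \<le> wS \<and> wS \<le> real (length S) \<longrightarrow>
     real (basket_sort_time \<rho> cmp S wS) \<le> C * (real (length S) * wS / (1 - \<rho>))"
proof (intro exI[of _ 115] allI impI)
  fix \<rho> :: real and cmp :: "'a cmp_fun" and S :: "'a list" and wS :: real
  assume "1/2 \<le> \<rho> \<and> \<rho> < 1 \<and> 1 \<le> wS \<and> wS \<le> real (length S)"
  then show "real (basket_sort_time \<rho> cmp S wS) \<le> 115 * (real (length S) * wS / (1 - \<rho>))"
    by (intro basket_sort_time_le) auto
qed

end
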